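(* Let $X$ be a proper geodesic metric space with a free, proper, cocompact, isometric action of a finitely generated group $\Gamma$ (with fixed finite symmetric generating set $S$), and let $P$ be a space with a proper $\Gamma$-action. If $p:P\to\mathbb{R}^N$ is a proper map satisfying the Displacement Bound Condition $\|p(z)-p(\gamma z)\|\le\|\gamma\|_S$ for all $z\in P$, $\gamma\in\Gamma$, then there exists a continuous map $\alpha:X\times P\to\mathbb{R}^N$ satisfying: (L1) $\alpha$ is invariant under the diagonal $\Gamma$-action on $X\times P$; (L2) $\alpha|_{\{x\}\times P}$ is proper for every $x\in X$; (L3) $\alpha|_{X\times\{z\}}$ is 1-Lipschitz for every $z\in P$.
   Context: $\|\gamma\|_S$ denotes the word length of $\gamma$ with respect to $S$. *)

theory Defs
  imports "HOL-Analysis.Analysis" "HOL-Algebra.Group" "HOL-Algebra.Generated_Groups"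
begin

definition word_length :: "('g, 'b) monoid_scheme \<Rightarrow> 'g set \<Rightarrow> 'g \<Rightarrow> nat" where
  "word_length G S g =
     (LEAST n. \<exists>l. length l = n \<and> set l \<subseteq> S \<and> foldr (\<lambda>s acc. s \<otimes>\<^bsub>G\<^esub> acc) l \<one>\<^bsub>G\<^esub> = g)"

definition fin_sym_gen_set :: "('g, 'b) monoid_scheme \<Rightarrow> 'g set \<Rightarrow> bool" where
  "fin_sym_gen_set G S \<longleftrightarrow> finite S \<and> S \<subseteq> carrier G \<and>
     (\<forall>s\<in>S. inv\<^bsub>G\<^esub> s \<in> S) \<and> generate G S = carrier G"

definition is_action :: "('g, 'b) monoid_scheme \<Rightarrow> ('g \<Rightarrow> 'a \<Rightarrow> 'a) \<Rightarrow> bool" where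
  "is_action G \<phi> \<longleftrightarrow> (\<forall>x. \<phi> \<one>\<^bsub>G\<^esub> x = x) \<and>
     (\<forall>g\<in>carrier G. \<forall>h\<in>carrier G. \<forall>x. \<phi> (g \<otimes>\<^bsub>G\<^esub> h) x = \<phi> g (\<phi> h x))"

text \<open>Action by homeomorphisms (each element acts continuously; inverses then act continuously too).\<close>
definition continuous_action :: "('g, 'b) monoid_scheme \<Rightarrow> ('g \<Rightarrow> 'a::topological_space \<Rightarrow> 'a) \<Rightarrow> bool" where
  "continuous_action G \<phi> \<longleftrightarrow> is_action G \<phi> \<and> (\<forall>g\<in>carrier G. continuous_on UNIV (\<phi> g))"

definition free_action :: "('g, 'b) monoid_scheme \<Rightarrow> ('g \<Rightarrow> 'a \<Rightarrow> 'a) \<Rightarrow> bool" where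
  "free_action G \<phi> \<longleftrightarrow> (\<forall>g\<in>carrier G. \<forall>x. \<phi> g x = x \<longrightarrow> g = \<one>\<^bsub>G\<^esub>)"

definition proper_action :: "('g, 'b) monoid_scheme \<Rightarrow> ('g \<Rightarrow> 'a::topological_space \<Rightarrow> 'a) \<Rightarrow> bool" where
  "proper_action G \<phi> \<longleftrightarrow>
     (\<forall>K. compact K \<longrightarrow> finite {g \<in> carrier G. \<phi> g ` K \<inter> K \<noteq> {}})"

definition cocompact_action :: "('g, 'b) monoid_scheme \<Rightarrow> ('g \<Rightarrow> 'a::topological_space \<Rightarrow> 'a) \<Rightarrow> bool" where
  "cocompact_action G \<phi> \<longleftrightarrow> (\<exists>K. compact K \<and> (\<Union>g\<in>carrier G. \<phi> g ` K) = UNIV)"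

definition isometric_action :: "('g, 'b) monoid_scheme \<Rightarrow> ('g \<Rightarrow> 'a::metric_space \<Rightarrow> 'a) \<Rightarrow> bool" where
  "isometric_action G \<phi> \<longleftrightarrow> (\<forall>g\<in>carrier G. \<forall>x y. dist (\<phi> g x) (\<phi> g y) = dist x y)"

definition proper_metric_space :: "'a::metric_space itself \<Rightarrow> bool" where
  "proper_metric_space _ \<longleftrightarrow> (\<forall>(x::'a) r. compact (cball x r))"

definition geodesic_space :: "'a::metric_space itself \<Rightarrow> bool" where
  "geodesic_space _ \<longleftrightarrow> (\<forall>x y::'a. \<exists>c :: real \<Rightarrow> 'a. c 0 = x \<and> c (dist x y) = y \<and>
      (\<forall>s\<in>{0..dist x y}. \<forall>t\<in>{0..dist x y}. dist (c s) (c t) = \<bar>s - t\<bar>))"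

definition proper_map_fun :: "('a::topological_space \<Rightarrow> 'b::topological_space) \<Rightarrow> bool" where
  "proper_map_fun f \<longleftrightarrow> continuous_on UNIV f \<and> (\<forall>K. compact K \<longrightarrow> compact (f -` K))"

end

theory Submission
  imports Defs
begin

(* Fix x0 in X. Since the action on X is proper and cocompact and X is geodesic, word length is
   coarsely bounded by orbit displacement, |g|_S <= M d(g x0, x0) + B (the easy half of the
   Milnor-Svarc lemma). For each coordinate i put

     a_i(x, z) = inf_g ( p_i(g z) + (M + 1) d(g x, x0) ).

   Reindexing g by g h makes a invariant under the diagonal action, and as an infimum of
   (M + 1)-Lipschitz functions it is (M + 1)-Lipschitz in x. By the displacement bound only the
   finitely many g with d(g x, x0) <= (2M + 1) d(x, x0) + B compete for the infimum, so a_i(x, -)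
   is a minimum of finitely many continuous functions and stays within (2M + 1) d(x, x0) + B of
   p_i; hence a(x, -) is a bounded perturbation of the proper map p. Dividing by N (M + 1) gives
   the 1-Lipschitz map alpha. *)

definition word_prod :: "('g, 'b) monoid_scheme \<Rightarrow> 'g list \<Rightarrow> 'g" where
  "word_prod G l = foldr (\<lambda>s acc. s \<otimes>\<^bsub>G\<^esub> acc) l \<one>\<^bsub>G\<^esub>"

lemma word_prod_Nil [simp]: "word_prod G [] = \<one>\<^bsub>G\<^esub>"
  by (simp add: word_prod_def)

lemma word_prod_Cons [simp]: "word_prod G (s # l) = s \<otimes>\<^bsub>G\<^esub> word_prod G l"
  by (simp add: word_prod_def)

lemma (in monoid) word_prod_closed: "set l \<subseteq> carrier G \<Longrightarrow> word_prod G l \<in> carrier G"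
  by (induction l) auto

lemma (in monoid) word_prod_append:
  "set l \<subseteq> carrier G \<Longrightarrow> set l' \<subseteq> carrier G \<Longrightarrow>
    word_prod G (l @ l') = word_prod G l \<otimes> word_prod G l'"
  by (induction l) (auto simp: m_assoc word_prod_closed)

lemma word_length_le_length:
  "set l \<subseteq> S \<Longrightarrow> word_length G S (word_prod G l) \<le> length l"
  unfolding word_length_def word_prod_def by (rule Least_le) auto

lemma (in monoid) generate_imp_word:
  assumes "S \<subseteq> carrier G" "\<And>s. s \<in> S \<Longrightarrow> inv s \<in> S" "g \<in> generate G S"
  shows "\<exists>l. set l \<subseteq> S \<and> word_prod G l = g"
  using assms(3)
proof (induction rule: generate.induct)
  case one
  show ?case by (intro exI[of _ "[]"]) simp
next
  case (incl h)
  with assms(1) show ?case by (intro exI[of _ "[h]"]) auto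
next
  case (inv h)
  with assms(1,2) have "inv h \<in> S" "inv h \<in> carrier G" by auto
  then show ?case by (intro exI[of _ "[inv h]"]) auto
next
  case (eng h1 h2)
  then obtain l1 l2 where "set l1 \<subseteq> S" "word_prod G l1 = h1" "set l2 \<subseteq> S" "word_prod G l2 = h2"
    by blast
  with assms(1) show ?case by (intro exI[of _ "l1 @ l2"]) (auto simp: word_prod_append)
qed

lemma (in monoid) word_length_attained:
  assumes "fin_sym_gen_set G S" "g \<in> carrier G"
  obtains l where "set l \<subseteq> S" "word_prod G l = g" "length l = word_length G S g"
proof -
  have "\<exists>l. set l \<subseteq> S \<and> word_prod G l = g"
    using assms by (intro generate_imp_word) (auto simp: fin_sym_gen_set_def)
  then have "\<exists>n l. length l = n \<and> set l \<subseteq> S \<and> foldr (\<lambda>s acc. s \<otimes> acc) l \<one> = g"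
    by (auto simp: word_prod_def)
  from LeastI_ex[OF this] show ?thesis
    using that unfolding word_length_def word_prod_def by blast
qed

lemma (in monoid) word_length_mult_le:
  assumes "fin_sym_gen_set G S" "g \<in> carrier G" "h \<in> carrier G"
  shows "word_length G S (g \<otimes> h) \<le> word_length G S g + word_length G S h"
proof -
  obtain l where l: "set l \<subseteq> S" "word_prod G l = g" "length l = word_length G S g"
    using word_length_attained[OF assms(1,2)] .
  obtain l' where l': "set l' \<subseteq> S" "word_prod G l' = h" "length l' = word_length G S h"
    using word_length_attained[OF assms(1,3)] .
  have "S \<subseteq> carrier G"
    using assms(1) by (simp add: fin_sym_gen_set_def)
  then have "word_prod G (l @ l') = g \<otimes> h"
    using l l' by (auto simp: word_prod_append)
  then show ?thesis
    using word_length_le_length[of "l @ l'" S G] l l' by simp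
qed

section \<open>Word length versus orbit displacement\<close>

lemma proper_action_finite_orbit_cball:
  fixes \<phi> :: "'g \<Rightarrow> 'x::metric_space \<Rightarrow> 'x"
  assumes "proper_metric_space TYPE('x)" "proper_action G \<phi>"
  shows "finite {g \<in> carrier G. dist (\<phi> g x) y \<le> r}"
proof -
  define K where "K = cball y (\<bar>r\<bar> + dist x y)"
  have "compact K"
    using assms(1) by (simp add: K_def proper_metric_space_def)
  moreover have "{g \<in> carrier G. dist (\<phi> g x) y \<le> r} \<subseteq> {g \<in> carrier G. \<phi> g ` K \<inter> K \<noteq> {}}"
  proof safe
    fix g assume g: "g \<in> carrier G" "dist (\<phi> g x) y \<le> r" "\<phi> g ` K \<inter> K = {}"
    from g(2) have "dist y (\<phi> g x) \<le> r"
      by (simp add: dist_commute)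
    then have "dist y (\<phi> g x) \<le> \<bar>r\<bar> + dist x y"
      using abs_ge_self[of r] zero_le_dist[of x y] by linarith
    then have "x \<in> K" "\<phi> g x \<in> K"
      by (auto simp: K_def dist_commute)
    with g(3) show False
      by blast
  qed
  ultimately show ?thesis
    using assms(2) finite_subset unfolding proper_action_def by blast
qed

lemma cocompact_orbit_cobounded:
  fixes \<phi> :: "'g \<Rightarrow> 'x::metric_space \<Rightarrow> 'x" and x0 :: 'x
  assumes "cocompact_action G \<phi>" "isometric_action G \<phi>"
  obtains R where "\<And>y. \<exists>h\<in>carrier G. dist y (\<phi> h x0) \<le> R"
proof -
  obtain K where K: "compact K" "(\<Union>g\<in>carrier G. \<phi> g ` K) = UNIV"
    using assms(1) unfolding cocompact_action_def by blast
  obtain R where R: "\<And>k. k \<in> K \<Longrightarrow> dist k x0 \<le> R"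
    using compact_imp_bounded[OF K(1)] bounded_any_center by (metis dist_commute)
  have "\<exists>h\<in>carrier G. dist y (\<phi> h x0) \<le> R" for y
  proof -
    obtain h k where "h \<in> carrier G" "k \<in> K" "y = \<phi> h k"
      using K(2) by blast
    moreover have "dist (\<phi> h k) (\<phi> h x0) = dist k x0"
      using assms(2) \<open>h \<in> carrier G\<close> unfolding isometric_action_def by blast
    ultimately show ?thesis
      using R by (intro bexI[of _ h]) auto
  qed
  then show ?thesis by (rule that)
qed

lemma geodesic_space_point_between:
  fixes x y :: "'x::metric_space"
  assumes "geodesic_space TYPE('x)" "0 \<le> t" "t \<le> dist x y"
  obtains w where "dist x w = t" "dist w y = dist x y - t"
proof -
  obtain c :: "real \<Rightarrow> 'x" where c: "c 0 = x" "c (dist x y) = y"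
      "\<forall>s\<in>{0..dist x y}. \<forall>s'\<in>{0..dist x y}. dist (c s) (c s') = \<bar>s - s'\<bar>"
    using assms(1) unfolding geodesic_space_def by blast
  have "t \<in> {0..dist x y}" "0 \<in> {0..dist x y}" "dist x y \<in> {0..dist x y}"
    using assms(2,3) by auto
  then have "dist (c 0) (c t) = t" "dist (c t) (c (dist x y)) = dist x y - t"
    using c(3) assms(2,3) by auto
  with c(1,2) show ?thesis
    using that[of "c t"] by simp
qed

text \<open>Coarse connectedness of the orbit: walking from \<open>x0\<close> to \<open>y\<close> along a geodesic in unit steps,
  each step is bridged by a group element moving \<open>x0\<close> by at most \<open>2 R + 1\<close>.\<close>
lemma (in group) word_length_le_geodesic_steps:
  fixes \<phi> :: "'a \<Rightarrow> 'x::metric_space \<Rightarrow> 'x"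
  assumes "fin_sym_gen_set G S" "geodesic_space TYPE('x)"
    and "is_action G \<phi>" "isometric_action G \<phi>"
    and net: "\<And>y. \<exists>h\<in>carrier G. dist y (\<phi> h x0) \<le> R"
    and step: "\<And>k. k \<in> carrier G \<Longrightarrow> dist (\<phi> k x0) x0 \<le> 2 * R + 1 \<Longrightarrow> real (word_length G S k) \<le> M"
  shows "\<gamma> \<in> carrier G \<Longrightarrow> dist y (\<phi> \<gamma> x0) \<le> R \<Longrightarrow> dist x0 y \<le> real n \<Longrightarrow>
    real (word_length G S \<gamma>) \<le> M * (real n + 1)"
proof (induction n arbitrary: \<gamma> y)
  case 0
  then have "dist (\<phi> \<gamma> x0) x0 \<le> R"
    by (simp add: dist_commute)
  then have "dist (\<phi> \<gamma> x0) x0 \<le> 2 * R + 1"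
    using zero_le_dist[of "\<phi> \<gamma> x0" x0] by linarith
  with step 0 show ?case by simp
next
  case (Suc n)
  obtain w where w: "dist x0 w = max 0 (dist x0 y - 1)" "dist w y = dist x0 y - max 0 (dist x0 y - 1)"
    using geodesic_space_point_between[OF assms(2), of "max 0 (dist x0 y - 1)" x0 y] by auto
  obtain h where h: "h \<in> carrier G" "dist w (\<phi> h x0) \<le> R"
    using net by blast
  have "real (word_length G S h) \<le> M * (real n + 1)"
    using Suc.IH[OF h] Suc.prems(3) w(1) by simp
  define k where "k = inv h \<otimes> \<gamma>"
  have k: "k \<in> carrier G" "h \<otimes> k = \<gamma>"
    using h(1) Suc.prems(1) by (auto simp: k_def m_assoc[symmetric])
  have "\<phi> h (\<phi> k x0) = \<phi> \<gamma> x0"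
    using assms(3) h(1) k unfolding is_action_def by metis
  moreover have "dist (\<phi> h (\<phi> k x0)) (\<phi> h x0) = dist (\<phi> k x0) x0"
    using assms(4) h(1) unfolding isometric_action_def by blast
  ultimately have "dist (\<phi> k x0) x0 = dist (\<phi> \<gamma> x0) (\<phi> h x0)"
    by simp
  also have "\<dots> \<le> dist (\<phi> \<gamma> x0) y + dist y w + dist w (\<phi> h x0)"
    using dist_triangle[of "\<phi> \<gamma> x0" "\<phi> h x0" y] dist_triangle[of y "\<phi> h x0" w] by linarith
  also have "\<dots> \<le> 2 * R + 1"
    using Suc.prems(2) w(2) h(2) by (simp add: dist_commute)
  finally have "real (word_length G S k) \<le> M"
    using step k(1) by blast
  moreover have "word_length G S \<gamma> \<le> word_length G S h + word_length G S k"
    using word_length_mult_le[OF assms(1) h(1) k(1)] k(2) by simp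
  ultimately show ?case
    using \<open>real (word_length G S h) \<le> M * (real n + 1)\<close> by (simp add: algebra_simps)
qed

lemma (in group) word_length_le_orbit_dist:
  fixes \<phi> :: "'a \<Rightarrow> 'x::metric_space \<Rightarrow> 'x" and x0 :: 'x
  assumes "fin_sym_gen_set G S"
    and "proper_metric_space TYPE('x)" "geodesic_space TYPE('x)"
    and "is_action G \<phi>" "isometric_action G \<phi>" "proper_action G \<phi>" "cocompact_action G \<phi>"
  obtains M B where "0 \<le> M" "\<And>\<gamma>. \<gamma> \<in> carrier G \<Longrightarrow> real (word_length G S \<gamma>) \<le> M * dist (\<phi> \<gamma> x0) x0 + B"
proof -
  obtain R where net: "\<And>y. \<exists>h\<in>carrier G. dist y (\<phi> h x0) \<le> R"
    by (rule cocompact_orbit_cobounded[OF assms(7,5)]) blast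
  define M where "M = real (Max (word_length G S ` {k \<in> carrier G. dist (\<phi> k x0) x0 \<le> 2 * R + 1}))"
  have step: "real (word_length G S k) \<le> M" if "k \<in> carrier G" "dist (\<phi> k x0) x0 \<le> 2 * R + 1" for k
    unfolding M_def using that proper_action_finite_orbit_cball[OF assms(2,6)] by simp
  have "0 \<le> M"
    by (simp add: M_def)
  have "0 \<le> R"
    using net[of x0] by (metis zero_le_dist order_trans)
  have "real (word_length G S \<gamma>) \<le> M * dist (\<phi> \<gamma> x0) x0 + 2 * M" if "\<gamma> \<in> carrier G" for \<gamma>
  proof -
    define n where "n = nat \<lceil>dist x0 (\<phi> \<gamma> x0)\<rceil>"
    have "dist (\<phi> \<gamma> x0) (\<phi> \<gamma> x0) \<le> R" "dist x0 (\<phi> \<gamma> x0) \<le> real n"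
      using \<open>0 \<le> R\<close> by (simp_all add: n_def real_nat_ceiling_ge)
    then have "real (word_length G S \<gamma>) \<le> M * (real n + 1)"
      using word_length_le_geodesic_steps[OF assms(1,3,4,5) net step that] by blast
    also have "\<dots> \<le> M * dist (\<phi> \<gamma> x0) x0 + 2 * M"
    proof -
      have "real n \<le> dist (\<phi> \<gamma> x0) x0 + 1"
        unfolding n_def by (simp add: dist_commute)
      from mult_left_mono[OF this \<open>0 \<le> M\<close>] show ?thesis
        by (simp add: algebra_simps)
    qed
    finally show ?thesis .
  qed
  with \<open>0 \<le> M\<close> show ?thesis
    by (rule that)
qed

lemma continuous_on_Min_finite:
  fixes f :: "'i \<Rightarrow> 'a::topological_space \<Rightarrow> 'b::linorder_topology"
  assumes "finite I" "I \<noteq> {}" "\<And>i. i \<in> I \<Longrightarrow> continuous_on A (f i)"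
  shows "continuous_on A (\<lambda>z. Min ((\<lambda>i. f i z) ` I))"
  using assms
proof (induction I rule: finite_ne_induct)
  case (insert i I)
  then show ?case
    by (simp add: continuous_on_min)
qed simp

lemma continuous_on_lipschitz_fst:
  fixes f :: "'x::metric_space \<Rightarrow> 'p::topological_space \<Rightarrow> 'y::metric_space"
  assumes cont: "\<And>x. continuous_on UNIV (f x)" and lip: "\<And>x y z. dist (f x z) (f y z) \<le> c * dist x y"
  shows "continuous_on UNIV (\<lambda>w. f (fst w) (snd w))"
  unfolding continuous_on_def
proof safe
  fix x z
  have "continuous_on UNIV (\<lambda>w. f x (snd w))"
    by (rule continuous_on_compose2[OF cont continuous_on_snd]) auto
  then have "((\<lambda>w. f x (snd w)) \<longlongrightarrow> f x z) (at (x, z))"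
    by (force simp: continuous_on_def)
  then have "((\<lambda>w. c * dist (fst w) x + dist (f x (snd w)) (f x z)) \<longlongrightarrow> c * dist x x + dist (f x z) (f x z))
      (at (x, z))"
    using tendsto_fst[OF tendsto_ident_at[of "(x, z)" UNIV]] by (intro tendsto_intros) auto
  then have "((\<lambda>w. c * dist (fst w) x + dist (f x (snd w)) (f x z)) \<longlongrightarrow> 0) (at (x, z))"
    by simp
  moreover have "dist (f (fst w) (snd w)) (f x z) \<le> dist (c * dist (fst w) x + dist (f x (snd w)) (f x z)) 0"
    for w :: "'x \<times> 'p"
    using dist_triangle[of "f (fst w) (snd w)" "f x z" "f x (snd w)"] lip[of "fst w" "snd w" x] by simp
  ultimately show "((\<lambda>w. f (fst w) (snd w)) \<longlongrightarrow> f (fst (x, z)) (snd (x, z))) (at (x, z) within UNIV)"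
    by (auto intro: metric_tendsto_imp_tendsto)
qed

lemma proper_map_fun_scaleR:
  fixes q :: "'p::topological_space \<Rightarrow> 'a::real_normed_vector"
  assumes "proper_map_fun q" "c \<noteq> 0"
  shows "proper_map_fun (\<lambda>z. c *\<^sub>R q z)"
  unfolding proper_map_fun_def
proof safe
  show "continuous_on UNIV (\<lambda>z. c *\<^sub>R q z)"
    using assms(1) unfolding proper_map_fun_def by (intro continuous_intros) simp
next
  fix K :: "'a set" assume "compact K"
  have "(\<lambda>z. c *\<^sub>R q z) -` K = q -` ((\<lambda>v. inverse c *\<^sub>R v) ` K)"
  proof -
    have "c *\<^sub>R q z \<in> K \<longleftrightarrow> q z \<in> (\<lambda>v. inverse c *\<^sub>R v) ` K" for z
    proof
      assume "c *\<^sub>R q z \<in> K"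
      then show "q z \<in> (\<lambda>v. inverse c *\<^sub>R v) ` K"
        using assms(2) by (intro image_eqI[of _ _ "c *\<^sub>R q z"]) auto
    next
      assume "q z \<in> (\<lambda>v. inverse c *\<^sub>R v) ` K"
      then show "c *\<^sub>R q z \<in> K"
        using assms(2) by auto
    qed
    then show ?thesis
      by auto
  qed
  with \<open>compact K\<close> assms(1) show "compact ((\<lambda>z. c *\<^sub>R q z) -` K)"
    by (simp add: proper_map_fun_def compact_scaling)
qed

lemma proper_map_fun_bounded_perturbation:
  fixes f q :: "'p::topological_space \<Rightarrow> 'a::heine_borel"
  assumes "proper_map_fun q" "continuous_on UNIV f" "\<And>z. dist (f z) (q z) \<le> D"
  shows "proper_map_fun f"
  unfolding proper_map_fun_def
proof safe
  fix K :: "'a set" assume "compact K"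
  then obtain r a where "K \<subseteq> cball a r"
    using bounded_subset_cball compact_imp_bounded by blast
  then have "f -` K \<subseteq> q -` cball a (r + D)"
    using assms(3) by (auto simp: subset_eq) (metis dist_commute dist_triangle add_mono order_trans)
  then have "f -` K = q -` cball a (r + D) \<inter> f -` K"
    by blast
  moreover have "closed (f -` K)"
    using \<open>compact K\<close> assms(2) by (simp add: closed_vimage compact_imp_closed)
  ultimately show "compact (f -` K)"
    using assms(1) by (metis compact_Int_closed compact_cball proper_map_fun_def)
qed (use assms(2) in simp)

lemma norm_le_card_mult_if_components_le:
  fixes v :: "real ^ 'n"
  assumes "\<And>i. \<bar>v $ i\<bar> \<le> e"
  shows "norm v \<le> real CARD('n) * e"
proof -
  have "norm v \<le> (\<Sum>i\<in>UNIV. \<bar>v $ i\<bar>)"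
    by (rule norm_le_l1_cart)
  also have "\<dots> \<le> (\<Sum>i\<in>(UNIV :: 'n set). e)"
    by (intro sum_mono assms)
  finally show ?thesis
    by simp
qed

section \<open>Infimum over the orbit\<close>

locale isometric_orbit =
  fixes G :: "('g, 'b) monoid_scheme" (structure)
    and \<phi> :: "'g \<Rightarrow> 'x::metric_space \<Rightarrow> 'x"
    and \<psi> :: "'g \<Rightarrow> 'p::topological_space \<Rightarrow> 'p"
    and x0 :: 'x
  assumes group: "group G"
    and \<phi>_action: "is_action G \<phi>"
    and \<phi>_isometric: "isometric_action G \<phi>"
    and \<psi>_action: "continuous_action G \<psi>"
    and finite_orbit_cball: "\<And>x r. finite {\<gamma> \<in> carrier G. dist (\<phi> \<gamma> x) x0 \<le> r}"
begin

sublocale group G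
  by (rule group)

lemma \<phi>_one: "\<phi> \<one> x = x"
  and \<phi>_mult: "g \<in> carrier G \<Longrightarrow> h \<in> carrier G \<Longrightarrow> \<phi> (g \<otimes> h) x = \<phi> g (\<phi> h x)"
  and dist_\<phi>: "g \<in> carrier G \<Longrightarrow> dist (\<phi> g x) (\<phi> g y) = dist x y"
  using \<phi>_action \<phi>_isometric unfolding is_action_def isometric_action_def by auto

lemma \<psi>_one: "\<psi> \<one> z = z"
  and \<psi>_mult: "g \<in> carrier G \<Longrightarrow> h \<in> carrier G \<Longrightarrow> \<psi> (g \<otimes> h) z = \<psi> g (\<psi> h z)"
  and continuous_on_\<psi>: "g \<in> carrier G \<Longrightarrow> continuous_on UNIV (\<psi> g)"
  using \<psi>_action unfolding continuous_action_def is_action_def by auto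

lemma image_mult_right_carrier: "g \<in> carrier G \<Longrightarrow> (\<lambda>\<gamma>. \<gamma> \<otimes> g) ` carrier G = carrier G"
proof safe
  fix h assume "g \<in> carrier G" "h \<in> carrier G"
  then have "h = (h \<otimes> inv g) \<otimes> g" "h \<otimes> inv g \<in> carrier G"
    by (simp_all add: m_assoc)
  then show "h \<in> (\<lambda>\<gamma>. \<gamma> \<otimes> g) ` carrier G"
    by blast
qed auto

end

locale orbit_infimum = isometric_orbit +
  fixes f :: "'p::topological_space \<Rightarrow> real" and M B :: real
  assumes f_continuous: "continuous_on UNIV f"
    and M_nonneg: "0 \<le> M"
    and f_displacement: "\<And>\<gamma> z. \<gamma> \<in> carrier G \<Longrightarrow> \<bar>f z - f (\<psi> \<gamma> z)\<bar> \<le> M * dist (\<phi> \<gamma> x0) x0 + B"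
begin

definition cost where
  "cost \<gamma> x z = f (\<psi> \<gamma> z) + (M + 1) * dist (\<phi> \<gamma> x) x0"

definition infconv where
  "infconv x z = (INF \<gamma>\<in>carrier G. cost \<gamma> x z)"

definition candidates where
  "candidates x = {\<gamma> \<in> carrier G. dist (\<phi> \<gamma> x) x0 \<le> (2 * M + 1) * dist x x0 + B}"

lemma B_nonneg: "0 \<le> B"
  using f_displacement[OF one_closed, of undefined] by (simp add: \<phi>_one \<psi>_one)

lemma cost_one: "cost \<one> x z = f z + (M + 1) * dist x x0"
  by (simp add: cost_def \<phi>_one \<psi>_one)

lemma cost_lower_bound:
  assumes "\<gamma> \<in> carrier G"
  shows "f z - M * dist x x0 - B + dist (\<phi> \<gamma> x) x0 \<le> cost \<gamma> x z"
proof -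
  have "dist (\<phi> \<gamma> x0) x0 \<le> dist x x0 + dist (\<phi> \<gamma> x) x0"
    using dist_triangle[of "\<phi> \<gamma> x0" x0 "\<phi> \<gamma> x"] dist_\<phi>[OF assms, of x0 x] by (simp add: dist_commute)
  then have "M * dist (\<phi> \<gamma> x0) x0 \<le> M * dist x x0 + M * dist (\<phi> \<gamma> x) x0"
    using M_nonneg by (metis distrib_left mult_left_mono)
  moreover have "f z - f (\<psi> \<gamma> z) \<le> M * dist (\<phi> \<gamma> x0) x0 + B"
    using f_displacement[OF assms, of z] by linarith
  ultimately show ?thesis
    unfolding cost_def distrib_right by linarith
qed

lemma cost_one_le_outside_candidates:
  assumes "\<gamma> \<in> carrier G" "\<gamma> \<notin> candidates x"
  shows "cost \<one> x z \<le> cost \<gamma> x z"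
proof -
  have "(2 * M + 1) * dist x x0 + B < dist (\<phi> \<gamma> x) x0"
    using assms by (auto simp: candidates_def)
  with cost_lower_bound[OF assms(1), of z x] show ?thesis
    unfolding cost_one distrib_right by linarith
qed

lemma one_in_candidates: "\<one> \<in> candidates x"
  using mult_nonneg_nonneg[OF M_nonneg zero_le_dist[of x x0]] B_nonneg
  by (simp add: candidates_def \<phi>_one distrib_right)

lemma finite_candidates: "finite (candidates x)"
  unfolding candidates_def by (rule finite_orbit_cball)

lemma Min_candidates_le_cost:
  assumes "\<gamma> \<in> carrier G"
  shows "Min ((\<lambda>\<gamma>. cost \<gamma> x z) ` candidates x) \<le> cost \<gamma> x z"
proof (cases "\<gamma> \<in> candidates x")
  case True
  then show ?thesis
    by (simp add: finite_candidates)
next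
  case False
  have "Min ((\<lambda>\<gamma>. cost \<gamma> x z) ` candidates x) \<le> cost \<one> x z"
    by (simp add: finite_candidates one_in_candidates)
  also have "\<dots> \<le> cost \<gamma> x z"
    by (rule cost_one_le_outside_candidates[OF assms False])
  finally show ?thesis .
qed

lemma infconv_eq_Min: "infconv x z = Min ((\<lambda>\<gamma>. cost \<gamma> x z) ` candidates x)"
  unfolding infconv_def
proof (rule cInf_eq_minimum)
  have "Min ((\<lambda>\<gamma>. cost \<gamma> x z) ` candidates x) \<in> (\<lambda>\<gamma>. cost \<gamma> x z) ` candidates x"
    using finite_candidates one_in_candidates by (intro Min_in) auto
  then show "Min ((\<lambda>\<gamma>. cost \<gamma> x z) ` candidates x) \<in> (\<lambda>\<gamma>. cost \<gamma> x z) ` carrier G"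
    by (auto simp: candidates_def)
qed (auto intro: Min_candidates_le_cost)

lemma infconv_le_cost: "\<gamma> \<in> carrier G \<Longrightarrow> infconv x z \<le> cost \<gamma> x z"
  by (simp add: infconv_eq_Min Min_candidates_le_cost)

lemma infconv_attained:
  obtains \<gamma> where "\<gamma> \<in> carrier G" "infconv x z = cost \<gamma> x z"
proof -
  have "Min ((\<lambda>\<gamma>. cost \<gamma> x z) ` candidates x) \<in> (\<lambda>\<gamma>. cost \<gamma> x z) ` candidates x"
    using finite_candidates one_in_candidates by (intro Min_in) auto
  then show ?thesis
    using that by (auto simp: infconv_eq_Min candidates_def)
qed

lemma infconv_invariant:
  assumes "g \<in> carrier G"
  shows "infconv (\<phi> g x) (\<psi> g z) = infconv x z"
proof -
  have "infconv (\<phi> g x) (\<psi> g z) = (INF \<gamma>\<in>carrier G. cost (\<gamma> \<otimes> g) x z)"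
    unfolding infconv_def using assms by (intro INF_cong) (simp_all add: cost_def \<phi>_mult \<psi>_mult)
  also have "\<dots> = (INF \<gamma>\<in>(\<lambda>\<gamma>. \<gamma> \<otimes> g) ` carrier G. cost \<gamma> x z)"
    by (simp add: image_image)
  also have "\<dots> = infconv x z"
    by (simp add: infconv_def image_mult_right_carrier[OF assms])
  finally show ?thesis .
qed

lemma infconv_le_shift: "infconv x z \<le> infconv y z + (M + 1) * dist x y"
proof -
  obtain \<gamma> where \<gamma>: "\<gamma> \<in> carrier G" "infconv y z = cost \<gamma> y z"
    using infconv_attained .
  have "dist (\<phi> \<gamma> x) x0 \<le> dist x y + dist (\<phi> \<gamma> y) x0"
    using dist_triangle[of "\<phi> \<gamma> x" x0 "\<phi> \<gamma> y"] dist_\<phi>[OF \<gamma>(1)] by simp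
  then have "cost \<gamma> x z \<le> cost \<gamma> y z + (M + 1) * dist x y"
    using M_nonneg unfolding cost_def by (simp add: distrib_left[symmetric] mult_left_mono)
  with infconv_le_cost[OF \<gamma>(1), of x z] \<gamma>(2) show ?thesis
    by linarith
qed

lemma infconv_lipschitz: "dist (infconv x z) (infconv y z) \<le> (M + 1) * dist x y"
  using infconv_le_shift[of x z y] infconv_le_shift[of y z x]
  by (simp add: dist_real_def dist_commute abs_le_iff)

lemma continuous_on_infconv_right: "continuous_on UNIV (infconv x)"
proof -
  have "continuous_on UNIV (\<lambda>z. cost \<gamma> x z)" if "\<gamma> \<in> candidates x" for \<gamma>
    using that unfolding cost_def candidates_def
    by (auto intro!: continuous_intros continuous_on_compose2[OF f_continuous continuous_on_\<psi>])
  then have "continuous_on UNIV (\<lambda>z. Min ((\<lambda>\<gamma>. cost \<gamma> x z) ` candidates x))"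
    using finite_candidates one_in_candidates by (intro continuous_on_Min_finite) auto
  then show ?thesis
    by (simp add: infconv_eq_Min[abs_def])
qed

lemma continuous_on_infconv: "continuous_on UNIV (\<lambda>w. infconv (fst w) (snd w))"
  by (rule continuous_on_lipschitz_fst[OF continuous_on_infconv_right infconv_lipschitz])

lemma infconv_close: "\<bar>infconv x z - f z\<bar> \<le> (2 * M + 1) * dist x x0 + B"
proof -
  obtain \<gamma> where \<gamma>: "\<gamma> \<in> carrier G" "infconv x z = cost \<gamma> x z"
    using infconv_attained .
  have "f z - M * dist x x0 - B \<le> infconv x z"
    using cost_lower_bound[OF \<gamma>(1), of z x] \<gamma>(2) zero_le_dist[of "\<phi> \<gamma> x" x0] by linarith
  moreover have "infconv x z \<le> f z + (M + 1) * dist x x0"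
    using infconv_le_cost[OF one_closed, of x z] by (simp add: cost_one)
  ultimately show ?thesis
    using mult_nonneg_nonneg[OF M_nonneg zero_le_dist[of x x0]] B_nonneg zero_le_dist[of x x0]
    unfolding distrib_right mult.assoc abs_le_iff by (intro conjI) linarith+
qed

end

locale bounded_displacement = isometric_orbit +
  fixes p :: "'p::topological_space \<Rightarrow> real ^ 'n" and M B :: real
  assumes p_proper: "proper_map_fun p"
    and M_nonneg: "0 \<le> M"
    and p_displacement: "\<And>\<gamma> z. \<gamma> \<in> carrier G \<Longrightarrow> norm (p z - p (\<psi> \<gamma> z)) \<le> M * dist (\<phi> \<gamma> x0) x0 + B"
begin

lemma orbit_infimum_component: "orbit_infimum G \<phi> \<psi> x0 (\<lambda>z. p z $ i) M B"
proof (intro orbit_infimum.intro orbit_infimum_axioms.intro isometric_orbit_axioms M_nonneg)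
  show "continuous_on UNIV (\<lambda>z. p z $ i)"
    using p_proper unfolding proper_map_fun_def by (simp add: continuous_on_component)
  show "\<bar>p z $ i - p (\<psi> \<gamma> z) $ i\<bar> \<le> M * dist (\<phi> \<gamma> x0) x0 + B" if "\<gamma> \<in> carrier G" for \<gamma> z
    using component_le_norm_cart[of "p z - p (\<psi> \<gamma> z)" i] p_displacement[OF that, of z] by simp
qed

definition infconv_vec where
  "infconv_vec x z = (\<chi> i. orbit_infimum.infconv G \<phi> \<psi> x0 (\<lambda>z. p z $ i) M x z)"

lemma continuous_on_infconv_vec: "continuous_on UNIV (\<lambda>w. infconv_vec (fst w) (snd w))"
  unfolding infconv_vec_def
  by (intro continuous_on_vec_lambda orbit_infimum.continuous_on_infconv[OF orbit_infimum_component])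

lemma infconv_vec_invariant: "g \<in> carrier G \<Longrightarrow> infconv_vec (\<phi> g x) (\<psi> g z) = infconv_vec x z"
  by (simp add: infconv_vec_def orbit_infimum.infconv_invariant[OF orbit_infimum_component])

lemma dist_infconv_vec_le: "dist (infconv_vec x z) (infconv_vec y z) \<le> real CARD('n) * (M + 1) * dist x y"
proof -
  have "\<bar>(infconv_vec x z - infconv_vec y z) $ i\<bar> \<le> (M + 1) * dist x y" for i
    using orbit_infimum.infconv_lipschitz[OF orbit_infimum_component, of i x z y]
    by (simp add: infconv_vec_def dist_real_def)
  then show ?thesis
    unfolding dist_norm mult.assoc by (rule norm_le_card_mult_if_components_le)
qed

lemma proper_map_fun_infconv_vec: "proper_map_fun (infconv_vec x)"
proof (rule proper_map_fun_bounded_perturbation[OF p_proper])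
  show "continuous_on UNIV (infconv_vec x)"
    unfolding infconv_vec_def
    by (intro continuous_on_vec_lambda orbit_infimum.continuous_on_infconv_right[OF orbit_infimum_component])
  have "\<bar>(infconv_vec x z - p z) $ i\<bar> \<le> (2 * M + 1) * dist x x0 + B" for z i
    using orbit_infimum.infconv_close[OF orbit_infimum_component, of i x z]
    by (simp add: infconv_vec_def)
  then show "dist (infconv_vec x z) (p z) \<le> real CARD('n) * ((2 * M + 1) * dist x x0 + B)" for z
    unfolding dist_norm by (rule norm_le_card_mult_if_components_le)
qed

end

theorem proposition3:
  fixes G :: "('g, 'b) monoid_scheme" and S :: "'g set"
    and \<phi> :: "'g \<Rightarrow> 'x::metric_space \<Rightarrow> 'x"
    and \<psi> :: "'g \<Rightarrow> 'p::topological_space \<Rightarrow> 'p"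
    and p :: "'p \<Rightarrow> real ^ 'n"
  assumes "group G"
    and "fin_sym_gen_set G S"
    and "proper_metric_space TYPE('x)"
    and "geodesic_space TYPE('x)"
    and "continuous_action G \<phi>" and "isometric_action G \<phi>" and "free_action G \<phi>"
    and "proper_action G \<phi>" and "cocompact_action G \<phi>"
    and "continuous_action G \<psi>" and "proper_action G \<psi>"
    and "proper_map_fun p"
    and "\<And>z g. g \<in> carrier G \<Longrightarrow> norm (p z - p (\<psi> g z)) \<le> real (word_length G S g)"
  shows "\<exists>\<alpha> :: 'x \<times> 'p \<Rightarrow> real ^ 'n.
           continuous_on UNIV \<alpha>
         \<and> (\<forall>g\<in>carrier G. \<forall>x z. \<alpha> (\<phi> g x, \<psi> g z) = \<alpha> (x, z))
         \<and> (\<forall>x. proper_map_fun (\<lambda>z. \<alpha> (x, z)))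
         \<and> (\<forall>z. \<forall>x y. dist (\<alpha> (x, z)) (\<alpha> (y, z)) \<le> dist x y)"
proof -
  interpret group G by fact
  fix x0 :: 'x
  have \<phi>_action: "is_action G \<phi>"
    using assms(5) by (simp add: continuous_action_def)
  obtain M B where "0 \<le> M" and word_length_le: "\<And>\<gamma>. \<gamma> \<in> carrier G \<Longrightarrow> real (word_length G S \<gamma>) \<le> M * dist (\<phi> \<gamma> x0) x0 + B"
    by (rule word_length_le_orbit_dist[OF assms(2-4) \<phi>_action assms(6,8,9)]) blast
  interpret bounded_displacement G \<phi> \<psi> x0 p M B
  proof
    show "finite {\<gamma> \<in> carrier G. dist (\<phi> \<gamma> x) x0 \<le> r}" for x r
      by (rule proper_action_finite_orbit_cball[OF assms(3,8)])
    show "norm (p z - p (\<psi> \<gamma> z)) \<le> M * dist (\<phi> \<gamma> x0) x0 + B" if "\<gamma> \<in> carrier G" for \<gamma> z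
      using assms(13)[OF that, of z] word_length_le[OF that] by linarith
  qed (use assms \<phi>_action \<open>0 \<le> M\<close> in auto)
  define L where "L = real CARD('n) * (M + 1)"
  have "0 < L"
    using \<open>0 \<le> M\<close> by (simp add: L_def)
  show ?thesis
  proof (intro exI[of _ "\<lambda>w. (1 / L) *\<^sub>R infconv_vec (fst w) (snd w)"] conjI allI ballI)
    show "continuous_on UNIV (\<lambda>w. (1 / L) *\<^sub>R infconv_vec (fst w) (snd w))"
      by (intro continuous_intros continuous_on_infconv_vec)
    show "proper_map_fun (\<lambda>z. (1 / L) *\<^sub>R infconv_vec (fst (x, z)) (snd (x, z)))" for x
      using proper_map_fun_scaleR[OF proper_map_fun_infconv_vec, of "1 / L" x] \<open>0 < L\<close> by simp
    show "dist ((1 / L) *\<^sub>R infconv_vec (fst (x, z)) (snd (x, z))) ((1 / L) *\<^sub>R infconv_vec (fst (y, z)) (snd (y, z)))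
        \<le> dist x y" for x y z
      using dist_infconv_vec_le[of x z y] \<open>0 < L\<close>
      by (simp add: dist_norm scaleR_diff_right[symmetric] L_def divide_le_eq mult.commute)
  qed (simp add: infconv_vec_invariant)
qed

end
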